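(* If $(x,y)$ and $(x,y')$ are both $\mathbf{x}$-vertices of $S$, then $d_S((x,y),(x,y'))\le d(\bar B)$.
   Context: Let $A\in\mathbb{R}^{m_1\times n_1}$, $a_1,a_2\in\mathbb{R}^{1\times n_1}$, $b_1,b_2\in\mathbb{R}^{1\times n_2}$, $B\in\mathbb{R}^{m_2\times n_2}$, $c_A\in\mathbb{R}^{m_1}$, $c_B\in\mathbb{R}^{m_2}$, and scalars $c_a^1,c_a^2,c_b^1,c_b^2$. Consider the ($3$-sum) polyhedron $S=\{(x,y)\in\mathbb{R}^{n_1}\times\mathbb{R}^{n_2}: Ax=c_A,\ a_1x+b_1y=c_a^1+c_b^1,\ a_2x+b_2y=c_a^2+c_b^2,\ By=c_B,\ x,y\ge 0\}$, assumed simple (nondegenerate). Let $P_A=\{x: Ax=c_A, x\ge 0\}$ and $\bar B=\begin{bmatrix}b_1\\ b_2\\ B\end{bmatrix}$. A vertex $(x,y)$ of $S$ is an $\mathbf{x}$-vertex if $x$ is a vertex of $P_A$. $d_S(v,w)$ is the minimum number of edges of an edge walk in $S$ from $v$ to $w$. For a polyhedron $P$, $d(P)$ is its combinatorial diameter, and for a matrix $M\in\mathbb{R}^{m\times n}$, $d(M):=\max\{d(\{z: Mz=r, z\ge 0\}): r\in\mathbb{R}^m\}$. *)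

theory Defs
  imports "HOL-Analysis.Analysis" "HOL-Library.Extended_Nat"
begin

definition poly_vertex :: "'a::real_vector set \<Rightarrow> 'a \<Rightarrow> bool" where
  "poly_vertex P v \<longleftrightarrow> v extreme_point_of P"

definition poly_adjacent :: "'a::real_vector set \<Rightarrow> 'a \<Rightarrow> 'a \<Rightarrow> bool" where
  "poly_adjacent P v w \<longleftrightarrow> poly_vertex P v \<and> poly_vertex P w \<and> v \<noteq> w
     \<and> closed_segment v w face_of P"

definition edge_walk :: "'a::real_vector set \<Rightarrow> 'a \<Rightarrow> 'a \<Rightarrow> nat \<Rightarrow> bool" where
  "edge_walk P v w k \<longleftrightarrow> (\<exists>p :: nat \<Rightarrow> 'a. p 0 = v \<and> p k = w \<and>
      (\<forall>i<k. poly_adjacent P (p i) (p (Suc i))))"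

text \<open>d_P(v,w): minimum number of edges of an edge walk (infinity if none).\<close>
definition edge_dist :: "'a::real_vector set \<Rightarrow> 'a \<Rightarrow> 'a \<Rightarrow> enat" where
  "edge_dist P v w = (INF k \<in> {k. edge_walk P v w k}. enat k)"

definition comb_diam :: "'a::real_vector set \<Rightarrow> enat" where
  "comb_diam P = (SUP vw \<in> {(v, w). poly_vertex P v \<and> poly_vertex P w}. edge_dist P (fst vw) (snd vw))"

definition std_poly :: "real^'n^'m \<Rightarrow> real^'m \<Rightarrow> (real^'n) set" where
  "std_poly M r = {z. M *v z = r \<and> (\<forall>i. 0 \<le> z $ i)}"

definition matrix_diam :: "real^'n^'m \<Rightarrow> enat" where
  "matrix_diam M = (SUP r \<in> UNIV. comb_diam (std_poly M r))"

definition simple_polyhedron :: "'a::euclidean_space set \<Rightarrow> bool" where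
  "simple_polyhedron P \<longleftrightarrow> polyhedron P \<and>
     (\<forall>v. poly_vertex P v \<longrightarrow> int (card {F. F facet_of P \<and> v \<in> F}) = aff_dim P)"

definition three_sum :: "real^'n1^'m1 \<Rightarrow> real^'n1 \<Rightarrow> real^'n1 \<Rightarrow> real^'n2 \<Rightarrow> real^'n2
    \<Rightarrow> real^'n2^'m2 \<Rightarrow> real^'m1 \<Rightarrow> real^'m2 \<Rightarrow> real \<Rightarrow> real \<Rightarrow> real \<Rightarrow> real
    \<Rightarrow> ((real^'n1) \<times> (real^'n2)) set" where
  "three_sum A a1 a2 b1 b2 B cA cB ca1 ca2 cb1 cb2 =
    {(x, y). A *v x = cA \<and> a1 \<bullet> x + b1 \<bullet> y = ca1 + cb1 \<and> a2 \<bullet> x + b2 \<bullet> y = ca2 + cb2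
       \<and> B *v y = cB \<and> (\<forall>i. 0 \<le> x $ i) \<and> (\<forall>j. 0 \<le> y $ j)}"

definition Bbar :: "real^'n2 \<Rightarrow> real^'n2 \<Rightarrow> real^'n2^'m2 \<Rightarrow> real^'n2^(bool + 'm2)" where
  "Bbar b1 b2 B = (\<chi> i. case i of Inl True \<Rightarrow> b1 | Inl False \<Rightarrow> b2 | Inr j \<Rightarrow> B $ j)"

definition x_vertex :: "((real^'n1) \<times> (real^'n2)) set \<Rightarrow> (real^'n1) set \<Rightarrow> (real^'n1) \<times> (real^'n2) \<Rightarrow> bool" where
  "x_vertex S PA v \<longleftrightarrow> poly_vertex S v \<and> poly_vertex PA (fst v)"

end

theory Submission imports Defs begin

text \<open>For a vertex \<open>x\<close> of \<open>P\<^sub>A\<close>, the fibre \<open>{(x, y) \<in> S}\<close> is a face of \<open>S\<close>, since \<open>x\<close>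
  is extreme in the projection \<open>P\<^sub>A\<close> of \<open>S\<close>. The fibre is the copy \<open>{x} \<times> Q\<close> of
  \<open>Q = {y. Bbar y = r, y \<ge> 0}\<close>, where \<open>r\<close> collects \<open>c\<^sub>a\<^sup>i + c\<^sub>b\<^sup>i - a\<^sub>i x\<close> and \<open>c\<^sub>B\<close>.
  Vertices and edges of a face are vertices and edges of the whole polyhedron, so
  \<open>y\<close>, \<open>y'\<close> are vertices of \<open>Q\<close> and every edge walk between them in \<open>Q\<close> is one
  in \<open>S\<close>; hence \<open>d\<^sub>S((x, y), (x, y')) \<le> d(Q) \<le> d(Bbar)\<close>.\<close>

lemma edge_walk_map:
  assumes "\<And>u v. poly_adjacent Q u v \<Longrightarrow> poly_adjacent P (f u) (f v)"
    and "edge_walk Q u v k"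
  shows "edge_walk P (f u) (f v) k"
proof -
  obtain p where "p 0 = u" "p k = v" "\<forall>i<k. poly_adjacent Q (p i) (p (Suc i))"
    using assms(2) unfolding edge_walk_def by blast
  then show ?thesis
    unfolding edge_walk_def by (intro exI[of _ "f \<circ> p"]) (simp add: assms(1))
qed

lemma edge_dist_map_le:
  assumes "\<And>u v. poly_adjacent Q u v \<Longrightarrow> poly_adjacent P (f u) (f v)"
  shows "edge_dist P (f u) (f v) \<le> edge_dist Q u v"
  unfolding edge_dist_def
  by (rule INF_superset_mono) (auto intro: edge_walk_map[OF assms])

lemma edge_dist_le_comb_diam:
  assumes "poly_vertex P v" "poly_vertex P w"
  shows "edge_dist P v w \<le> comb_diam P"
  unfolding comb_diam_def by (rule SUP_upper2[of "(v, w)"]) (use assms in auto)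

lemma comb_diam_le_matrix_diam: "comb_diam (std_poly M r) \<le> matrix_diam M"
  unfolding matrix_diam_def by (rule SUP_upper) simp

lemma poly_vertex_face_iff:
  "F face_of S \<Longrightarrow> poly_vertex F v \<longleftrightarrow> poly_vertex S v \<and> v \<in> F"
  by (simp add: poly_vertex_def extreme_point_of_face)

lemma poly_adjacent_face:
  assumes "F face_of S" "poly_adjacent F v w"
  shows "poly_adjacent S v w"
  using assms face_of_trans poly_vertex_face_iff unfolding poly_adjacent_def by blast

lemma face_of_Pair_image_iff:
  fixes x :: "'a::real_vector" and T S :: "'b::real_vector set"
  shows "Pair x ` T face_of Pair x ` S \<longleftrightarrow> T face_of S"
proof -
  have translate: "Pair x ` U = (+) (x, 0) ` ((\<lambda>y. (0, y)) ` U)" for U :: "'b set"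
    by (simp add: image_image)
  have "linear (\<lambda>y. (0::'a, y))" "inj (\<lambda>y. (0::'a, y))"
    by (auto simp: linear_iff inj_on_def)
  then show ?thesis
    unfolding translate face_of_translation_eq by (rule face_of_linear_image)
qed

lemma poly_vertex_Pair_image_iff:
  "poly_vertex (Pair x ` Q) (x, u) \<longleftrightarrow> poly_vertex Q u"
  using face_of_Pair_image_iff[of x "{u}" Q] by (simp add: poly_vertex_def flip: face_of_singleton)

lemma closed_segment_Pair: "closed_segment (x, u) (x, v) = Pair x ` closed_segment u v"
  by (auto simp: in_segment image_iff algebra_simps simp flip: scaleR_add_left)

lemma poly_adjacent_Pair_image_iff:
  "poly_adjacent (Pair x ` Q) (x, u) (x, v) \<longleftrightarrow> poly_adjacent Q u v"
  by (simp add: poly_adjacent_def poly_vertex_Pair_image_iff closed_segment_Pair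
      face_of_Pair_image_iff)

lemma poly_vertex_iff_Pair_face:
  assumes "Pair x ` Q face_of S"
  shows "poly_vertex Q v \<longleftrightarrow> poly_vertex S (x, v) \<and> v \<in> Q"
  using poly_vertex_face_iff[OF assms, of "(x, v)"] poly_vertex_Pair_image_iff by blast

lemma edge_dist_Pair_face_le:
  assumes "Pair x ` Q face_of S"
  shows "edge_dist S (x, u) (x, v) \<le> edge_dist Q u v"
proof (rule edge_dist_map_le[where f = "Pair x"])
  show "poly_adjacent S (x, u) (x, v)" if "poly_adjacent Q u v" for u v
    using that poly_adjacent_face[OF assms] poly_adjacent_Pair_image_iff by blast
qed

lemma fibre_face_of:
  fixes S :: "('a::euclidean_space \<times> 'b::euclidean_space) set"
  assumes "x extreme_point_of P" "fst ` S \<subseteq> P" "convex S"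
  shows "{p \<in> S. fst p = x} face_of S"
proof -
  have "{x} \<times> UNIV face_of P \<times> (UNIV :: 'b set)"
    using assms(1) by (simp add: face_of_Times_eq face_of_singleton face_of_refl)
  moreover have "{x} \<times> UNIV \<inter> S = {p \<in> S. fst p = x}" "P \<times> UNIV \<inter> S = S"
    using assms(2) by auto
  ultimately show ?thesis
    using face_of_slice[OF _ assms(3)] by metis
qed

lemma Bbar_mult_eq_iff:
  "Bbar b1 b2 B *v y = r \<longleftrightarrow>
     b1 \<bullet> y = r $ Inl True \<and> b2 \<bullet> y = r $ Inl False \<and> (\<forall>j. (B *v y) $ j = r $ Inr j)"
  unfolding vec_eq_iff split_sum_all all_bool_eq
  by (simp add: Bbar_def matrix_vector_mult_def inner_vec_def mult.commute)

definition three_sum_fibre_rhs ::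
    "real^'n1 \<Rightarrow> real^'n1 \<Rightarrow> real^'m2 \<Rightarrow> real \<Rightarrow> real \<Rightarrow> real \<Rightarrow> real \<Rightarrow> real^'n1
     \<Rightarrow> real^(bool + 'm2)" where
  "three_sum_fibre_rhs a1 a2 cB ca1 ca2 cb1 cb2 x =
     (\<chi> i. case i of Inl True \<Rightarrow> ca1 + cb1 - a1 \<bullet> x | Inl False \<Rightarrow> ca2 + cb2 - a2 \<bullet> x
        | Inr j \<Rightarrow> cB $ j)"

lemma mem_three_sum_fibre_iff:
  assumes "x \<in> std_poly A cA"
  shows "(x, y) \<in> three_sum A a1 a2 b1 b2 B cA cB ca1 ca2 cb1 cb2 \<longleftrightarrow>
    y \<in> std_poly (Bbar b1 b2 B) (three_sum_fibre_rhs a1 a2 cB ca1 ca2 cb1 cb2 x)"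
  using assms
  unfolding three_sum_def std_poly_def Bbar_mult_eq_iff three_sum_fibre_rhs_def
  by (auto simp: algebra_simps vec_eq_iff)

lemma three_sum_fibre_face_of:
  assumes "convex (three_sum A a1 a2 b1 b2 B cA cB ca1 ca2 cb1 cb2)"
    and "x extreme_point_of std_poly A cA"
  shows "Pair x ` std_poly (Bbar b1 b2 B) (three_sum_fibre_rhs a1 a2 cB ca1 ca2 cb1 cb2 x)
    face_of three_sum A a1 a2 b1 b2 B cA cB ca1 ca2 cb1 cb2"
proof -
  have "x \<in> std_poly A cA"
    using assms(2) by (simp add: extreme_point_of_def)
  then have "{p \<in> three_sum A a1 a2 b1 b2 B cA cB ca1 ca2 cb1 cb2. fst p = x}
      = Pair x ` std_poly (Bbar b1 b2 B) (three_sum_fibre_rhs a1 a2 cB ca1 ca2 cb1 cb2 x)"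
    by (force simp flip: mem_three_sum_fibre_iff)
  moreover have "fst ` three_sum A a1 a2 b1 b2 B cA cB ca1 ca2 cb1 cb2 \<subseteq> std_poly A cA"
    by (auto simp: three_sum_def std_poly_def)
  ultimately show ?thesis
    using fibre_face_of[OF assms(2) _ assms(1)] by simp
qed

theorem lemma7:
  fixes A :: "real^'n1^'m1" and a1 a2 :: "real^'n1" and b1 b2 :: "real^'n2"
    and B :: "real^'n2^'m2" and cA :: "real^'m1" and cB :: "real^'m2"
    and ca1 ca2 cb1 cb2 :: real and x :: "real^'n1" and y y' :: "real^'n2"
  assumes "simple_polyhedron (three_sum A a1 a2 b1 b2 B cA cB ca1 ca2 cb1 cb2)"
    and "x_vertex (three_sum A a1 a2 b1 b2 B cA cB ca1 ca2 cb1 cb2) (std_poly A cA) (x, y)"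
    and "x_vertex (three_sum A a1 a2 b1 b2 B cA cB ca1 ca2 cb1 cb2) (std_poly A cA) (x, y')"
  shows "edge_dist (three_sum A a1 a2 b1 b2 B cA cB ca1 ca2 cb1 cb2) (x, y) (x, y')
           \<le> matrix_diam (Bbar b1 b2 B)"
proof -
  define S where "S = three_sum A a1 a2 b1 b2 B cA cB ca1 ca2 cb1 cb2"
  define Q where "Q = std_poly (Bbar b1 b2 B) (three_sum_fibre_rhs a1 a2 cB ca1 ca2 cb1 cb2 x)"
  have x: "x extreme_point_of std_poly A cA"
    using assms(2) by (simp add: x_vertex_def poly_vertex_def)
  then have "x \<in> std_poly A cA"
    by (simp add: extreme_point_of_def)
  have "convex S"
    using assms(1) by (simp add: S_def simple_polyhedron_def polyhedron_imp_convex)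
  then have face: "Pair x ` Q face_of S"
    unfolding S_def Q_def by (rule three_sum_fibre_face_of[OF _ x])
  have "poly_vertex Q v" if "x_vertex S (std_poly A cA) (x, v)" for v
  proof -
    have "poly_vertex S (x, v)" "(x, v) \<in> S"
      using that by (auto simp: x_vertex_def poly_vertex_def extreme_point_of_def)
    then show ?thesis
      using mem_three_sum_fibre_iff[OF \<open>x \<in> std_poly A cA\<close>] poly_vertex_iff_Pair_face[OF face]
      unfolding S_def Q_def by blast
  qed
  then have "poly_vertex Q y" "poly_vertex Q y'"
    using assms(2,3) by (simp_all add: S_def)
  have "edge_dist S (x, y) (x, y') \<le> edge_dist Q y y'"
    using face by (rule edge_dist_Pair_face_le)
  also have "\<dots> \<le> comb_diam Q"
    by (rule edge_dist_le_comb_diam) fact+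
  also have "\<dots> \<le> matrix_diam (Bbar b1 b2 B)"
    unfolding Q_def by (rule comb_diam_le_matrix_diam)
  finally show ?thesis
    by (simp add: S_def)
qed

end
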